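(* Let $x\in(0,1)$ be irrational with OOCF expansion $((a_n,\varepsilon_n))_{n\ge1}$ and let $f(t)=\frac{1-t}{1+t}$. Define $\phi(k+1,-1)=(2k,-1)$ and $\phi(k,1)=(2k,1)$ for $k\ge1$. Then the EICF digits of $f(x)$ are $(b_n,\eta_n)=\phi(a_n,\varepsilon_n)$ for all $n\ge1$, and for all $n\ge1$ the $n$-th EICF convergent of $f(x)$ satisfies $p^E_n/q^E_n=f(p_n/q_n)$, where $p_n/q_n$ is the $n$-th OOCF principal convergent of $x$.
   Context: OOCF: digits $D=\{(1,1)\}\cup\{(a,\varepsilon):a\ge2,\ \varepsilon=\pm1\}$; $B(k+1,-1)=[\frac{k-1}{k},\frac{2k-1}{2k+1}]$, $B(k,1)=[\frac{2k-1}{2k+1},\frac{k}{k+1}]$ ($k\ge1$); $T(x)=\frac{kx-(k-1)}{k-(k+1)x}$ on $B(k+1,-1)$, $T(x)=\frac{k-(k+1)x}{kx-(k-1)}$ on $B(k,1)$, $T(1)=1$. The OOCF expansion of irrational $x\in(0,1)$ is the unique sequence $(a_n,\varepsilon_n)\in D$ with $T^{n-1}(x)\in B(a_n,\varepsilon_n)$ for all $n\ge1$; its $n$-th principal convergent is $p_n/q_n=1-\cfrac{1}{a_1+\cfrac{\varepsilon_1}{2-\cfrac{1}{\ddots\ \cfrac{\varepsilon_{n-1}}{2-\cfrac{1}{a_n+\varepsilon_n/2}}}}}$. EICF: $T_E:[0,1]\to[0,1]$, $T_E(y)=\frac1y-2k$ for $y\in[\frac1{2k+1},\frac1{2k}]$,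 $T_E(y)=2k-\frac1y$ for $y\in[\frac1{2k},\frac1{2k-1}]$ ($k\ge1$), $T_E(0)=0$. For irrational $y\in(0,1)$, its EICF digits are $(b_n,\eta_n)=(2k,1)$ if $T_E^{n-1}(y)\in[\frac1{2k+1},\frac1{2k}]$ and $(2k,-1)$ if $T_E^{n-1}(y)\in[\frac1{2k},\frac1{2k-1}]$; its $n$-th EICF convergent is $p^E_n/q^E_n=\cfrac{1}{b_1+\cfrac{\eta_1}{b_2+\cfrac{\eta_2}{\ddots+\cfrac{\eta_{n-1}}{b_n}}}}$. *)

theory Defs
  imports Complex_Main
begin

definition oocf_D :: "(nat \<times> int) set" where
  "oocf_D = {(1, 1)} \<union> {(a, e). a \<ge> 2 \<and> (e = 1 \<or> e = -1)}"

text \<open>B(k+1,-1) = [(k-1)/k, (2k-1)/(2k+1)], B(k,1) = [(2k-1)/(2k+1), k/(k+1)], k >= 1.\<close>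
definition oocf_B :: "nat \<times> int \<Rightarrow> real set" where
  "oocf_B d = (case d of (a, e) \<Rightarrow>
     if e = -1 \<and> a \<ge> 2 then
       {(real (a - 1) - 1) / real (a - 1) .. (2 * real (a - 1) - 1) / (2 * real (a - 1) + 1)}
     else if e = 1 \<and> a \<ge> 1 then
       {(2 * real a - 1) / (2 * real a + 1) .. real a / (real a + 1)}
     else {})"

definition oocf_T :: "real \<Rightarrow> real" where
  "oocf_T x =
     (if x = 1 then 1
      else if \<exists>k::nat. k \<ge> 1 \<and> x \<in> oocf_B (k + 1, -1) then
        (let k = real (SOME k::nat. k \<ge> 1 \<and> x \<in> oocf_B (k + 1, -1))
         in (k * x - (k - 1)) / (k - (k + 1) * x))
      else
        (let k = real (SOME k::nat. k \<ge> 1 \<and> x \<in> oocf_B (k, 1))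
         in (k - (k + 1) * x) / (k * x - (k - 1))))"

definition oocf_digit :: "real \<Rightarrow> nat \<Rightarrow> nat \<times> int" where
  "oocf_digit x n = (THE d. d \<in> oocf_D \<and> (oocf_T ^^ (n - 1)) x \<in> oocf_B d)"

fun oocf_tail :: "(nat \<times> int) list \<Rightarrow> real" where
  "oocf_tail [] = 0"
| "oocf_tail [(a, e)] = real a + real_of_int e / 2"
| "oocf_tail ((a, e) # ds) = real a + real_of_int e / (2 - 1 / oocf_tail ds)"

definition oocf_conv :: "real \<Rightarrow> nat \<Rightarrow> real" where
  "oocf_conv x n = 1 - 1 / oocf_tail (map (oocf_digit x) [1..<n + 1])"

definition eicf_D :: "(nat \<times> int) set" where
  "eicf_D = {(b, e). \<exists>k::nat. k \<ge> 1 \<and> b = 2 * k \<and> (e = 1 \<or> e = -1)}"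

definition eicf_B :: "nat \<times> int \<Rightarrow> real set" where
  "eicf_B d = (case d of (b, e) \<Rightarrow>
     if e = 1 then {1 / (real b + 1) .. 1 / real b}
     else {1 / real b .. 1 / (real b - 1)})"

definition eicf_T :: "real \<Rightarrow> real" where
  "eicf_T y =
     (if y = 0 then 0
      else if \<exists>k::nat. k \<ge> 1 \<and> y \<in> {1 / (2 * real k + 1) .. 1 / (2 * real k)} then
        (let k = real (SOME k::nat. k \<ge> 1 \<and> y \<in> {1 / (2 * real k + 1) .. 1 / (2 * real k)})
         in 1 / y - 2 * k)
      else
        (let k = real (SOME k::nat. k \<ge> 1 \<and> y \<in> {1 / (2 * real k) .. 1 / (2 * real k - 1)})
         in 2 * k - 1 / y))"

definition eicf_digit :: "real \<Rightarrow> nat \<Rightarrow> nat \<times> int" where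
  "eicf_digit y n = (THE d. d \<in> eicf_D \<and> (eicf_T ^^ (n - 1)) y \<in> eicf_B d)"

fun eicf_tail :: "(nat \<times> int) list \<Rightarrow> real" where
  "eicf_tail [] = 0"
| "eicf_tail [(b, e)] = real b"
| "eicf_tail ((b, e) # ds) = real b + real_of_int e / eicf_tail ds"

definition eicf_conv :: "real \<Rightarrow> nat \<Rightarrow> real" where
  "eicf_conv y n = 1 / eicf_tail (map (eicf_digit y) [1..<n + 1])"

definition digit_phi :: "nat \<times> int \<Rightarrow> nat \<times> int" where
  "digit_phi d = (case d of (a, e) \<Rightarrow> if e = -1 then (2 * (a - 1), -1) else (2 * a, 1))"

definition cayley_f :: "real \<Rightarrow> real" where
  "cayley_f t = (1 - t) / (1 + t)"

end

theory Submission
  imports Defs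
begin

text \<open>
  The Cayley map \<open>f t = (1 - t) / (1 + t)\<close> is a decreasing involution of \<open>(0, 1)\<close> that sends
  the endpoints of the OOCF cylinders \<open>B(k, 1)\<close> and \<open>B(k + 1, -1)\<close> onto those of the EICF
  cylinders of the digits \<open>(2k, 1)\<close> and \<open>(2k, -1)\<close>, so \<open>z\<close> has OOCF digit \<open>d\<close> exactly when
  \<open>f z\<close> has EICF digit \<open>\<phi> d\<close>. Writing \<open>w = 1 / f z = (1 + z) / (1 - z)\<close>, the OOCF map on these
  cylinders is \<open>T z = f (w - 2k)\<close> resp. \<open>f (2k - w)\<close>, while \<open>T\<^sub>E (f z)\<close> is \<open>w - 2k\<close> resp.
  \<open>2k - w\<close>; hence \<open>f\<close> conjugates \<open>T\<close> to \<open>T\<^sub>E\<close> and all digits correspond. For the convergents,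
  induction on the digit list shows that the EICF tail of the \<open>\<phi>\<close>-digits is \<open>2A - 1\<close> when \<open>A\<close> is
  the OOCF tail, and \<open>f (1 - 1/A) = 1 / (2A - 1)\<close>.
\<close>

lemma cayley_f_involution: "t \<noteq> -1 \<Longrightarrow> cayley_f (cayley_f t) = t"
  unfolding cayley_f_def by (simp add: field_simps add_eq_0_iff2)

lemma cayley_f_le_iff: "-1 < s \<Longrightarrow> -1 < t \<Longrightarrow> cayley_f s \<le> cayley_f t \<longleftrightarrow> t \<le> s"
  unfolding cayley_f_def by (simp add: divide_simps) (auto simp: algebra_simps)

lemma cayley_f_unit_interval: "0 < t \<Longrightarrow> t < 1 \<Longrightarrow> 0 < cayley_f t \<and> cayley_f t < 1"
  unfolding cayley_f_def by (simp add: divide_simps)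

lemma cayley_f_Rats_iff: "t \<noteq> -1 \<Longrightarrow> cayley_f t \<in> \<rat> \<longleftrightarrow> t \<in> \<rat>"
  by (metis Rats_1 Rats_add Rats_diff Rats_divide cayley_f_def cayley_f_involution)

lemma cayley_f_irrational_unit_interval:
  "0 < z \<Longrightarrow> z < 1 \<Longrightarrow> z \<notin> \<rat> \<Longrightarrow> 0 < cayley_f z \<and> cayley_f z < 1 \<and> cayley_f z \<notin> \<rat>"
  using cayley_f_unit_interval cayley_f_Rats_iff by simp

text \<open>No hypothesis \<open>q + p \<noteq> 0\<close> is needed: both sides are then \<open>0\<close>, as \<open>x / 0 = 0\<close>.\<close>

lemma cayley_f_divide: "q \<noteq> 0 \<Longrightarrow> cayley_f (p / q) = (q - p) / (q + p)"
proof -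
  assume q: "q \<noteq> 0"
  have "cayley_f (p / q) = ((q - p) / q) / ((q + p) / q)"
    unfolding cayley_f_def using q by (simp add: diff_divide_distrib add_divide_distrib)
  also have "\<dots> = (q - p) / (q + p)" using q by simp
  finally show ?thesis .
qed

lemma cayley_f_shift_plus:
  "z \<noteq> 1 \<Longrightarrow> cayley_f ((1 + z) / (1 - z) - 2 * c) = (c - (c + 1) * z) / (c * z - (c - 1))"
proof -
  assume "z \<noteq> 1"
  then have "(1 + z) / (1 - z) - 2 * c = (1 + z - 2 * c * (1 - z)) / (1 - z)"
    by (simp add: field_simps)
  also have "cayley_f \<dots> = (2 * (c - (c + 1) * z)) / (2 * (c * z - (c - 1)))"
    using \<open>z \<noteq> 1\<close> by (subst cayley_f_divide) (simp_all add: algebra_simps)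
  finally show ?thesis by (simp only: mult_divide_mult_cancel_left_if) simp
qed

lemma cayley_f_shift_minus:
  "z \<noteq> 1 \<Longrightarrow> cayley_f (2 * c - (1 + z) / (1 - z)) = (c * z - (c - 1)) / (c - (c + 1) * z)"
proof -
  assume "z \<noteq> 1"
  then have "2 * c - (1 + z) / (1 - z) = (2 * c * (1 - z) - (1 + z)) / (1 - z)"
    by (simp add: field_simps)
  also have "cayley_f \<dots> = (2 * (c * z - (c - 1))) / (2 * (c - (c + 1) * z))"
    using \<open>z \<noteq> 1\<close> by (subst cayley_f_divide) (simp_all add: algebra_simps)
  finally show ?thesis by (simp only: mult_divide_mult_cancel_left_if) simp
qed

lemma cayley_f_one_minus_inverse: "A \<noteq> 0 \<Longrightarrow> cayley_f (1 - 1 / A) = 1 / (2 * A - 1)"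
  by (simp add: cayley_f_def field_simps)

lemma floor_eq_if_mem_Icc:
  fixes w :: real
  assumes "w \<notin> \<rat>" "of_int c \<le> w" "w \<le> of_int c + 1"
  shows "\<lfloor>w\<rfloor> = c"
proof -
  have "w \<noteq> of_int c + 1" using assms(1) by (metis Rats_add Rats_of_int Rats_1)
  with assms(2,3) show ?thesis by (simp add: floor_eq_iff)
qed

lemma irrational_in_unit_interval_shift:
  fixes w c :: real
  assumes "w \<notin> \<rat>" "c \<in> \<rat>" "c \<le> w" "w \<le> c + 1"
  shows "0 < w - c \<and> w - c < 1 \<and> w - c \<notin> \<rat>" "0 < c + 1 - w \<and> c + 1 - w < 1 \<and> c + 1 - w \<notin> \<rat>"
proof -
  have "w \<noteq> c" "w \<noteq> c + 1" using assms(1,2) by auto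
  moreover have "w - c \<notin> \<rat>" "c + 1 - w \<notin> \<rat>" using assms(1,2) by (simp_all add: Rats_diff_iff)
  ultimately show "0 < w - c \<and> w - c < 1 \<and> w - c \<notin> \<rat>" "0 < c + 1 - w \<and> c + 1 - w < 1 \<and> c + 1 - w \<notin> \<rat>"
    using assms(3,4) by auto
qed

lemma bij_betw_ex1_transfer:
  assumes g: "bij_betw g A B" and PQ: "\<And>a. a \<in> A \<Longrightarrow> P a \<longleftrightarrow> Q (g a)"
    and ex1: "\<exists>!b. b \<in> B \<and> Q b"
  shows "\<exists>!a. a \<in> A \<and> P a" "g (THE a. a \<in> A \<and> P a) = (THE b. b \<in> B \<and> Q b)"
proof -
  obtain b where b: "b \<in> B" "Q b" using ex1 by blast
  then obtain a where a: "a \<in> A" "g a = b" using g by (auto simp: bij_betw_def)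
  have "a' = a" if "a' \<in> A" "P a'" for a'
  proof -
    have "g a' \<in> B" "Q (g a')" using that g PQ by (auto simp: bij_betw_def)
    with ex1 b have "g a' = g a" using a(2) by blast
    with that(1) a(1) g show ?thesis by (auto simp: bij_betw_def inj_on_def)
  qed
  moreover have "P a" using PQ a b by simp
  ultimately show ex1_a: "\<exists>!a. a \<in> A \<and> P a" using a(1) by blast
  show "g (THE a. a \<in> A \<and> P a) = (THE b. b \<in> B \<and> Q b)"
    using theI'[OF ex1_a] PQ g ex1 by (intro the1_equality[symmetric]) (auto simp: bij_betw_def)
qed

lemma oocf_D_cases:
  assumes "d \<in> oocf_D"
  obtains k where "k \<ge> 1" "d = (k, 1)" | k where "k \<ge> 1" "d = (k + 1, -1)"
proof -
  obtain a e where d: "d = (a, e)" by (cases d)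
  consider "a = 1" "e = 1" | "a \<ge> 2" "e = 1" | "a \<ge> 2" "e = -1"
    using assms unfolding d oocf_D_def by auto
  then show thesis
  proof cases
    case 3
    then have "d = (a - 1 + 1, -1)" "a - 1 \<ge> 1" using d by auto
    then show thesis by (rule that(2)[rotated])
  qed (use d that(1) in auto)
qed

lemma eicf_D_cases:
  assumes "e \<in> eicf_D"
  obtains k where "k \<ge> 1" "e = (2 * k, 1)" | k where "k \<ge> 1" "e = (2 * k, -1)"
  using assms unfolding eicf_D_def by blast

lemma oocf_D_plus_iff [simp]: "(k, 1) \<in> oocf_D \<longleftrightarrow> k \<ge> 1"
  by (auto simp: oocf_D_def)

lemma oocf_D_minus_iff [simp]: "(Suc k, -1) \<in> oocf_D \<longleftrightarrow> k \<ge> 1"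
  by (auto simp: oocf_D_def)

lemma eicf_D_iff [simp]: "(2 * k, e) \<in> eicf_D \<longleftrightarrow> k \<ge> 1 \<and> (e = 1 \<or> e = -1)"
  by (auto simp: eicf_D_def)

lemma digit_phi_plus [simp]: "digit_phi (k, 1) = (2 * k, 1)"
  by (simp add: digit_phi_def)

lemma digit_phi_minus [simp]: "digit_phi (Suc k, -1) = (2 * k, -1)"
  by (simp add: digit_phi_def)

lemma bij_betw_digit_phi: "bij_betw digit_phi oocf_D eicf_D"
proof (rule bij_betw_imageI)
  show "inj_on digit_phi oocf_D"
  proof (rule inj_onI)
    fix d d' assume "d \<in> oocf_D" "d' \<in> oocf_D" "digit_phi d = digit_phi d'"
    then show "d = d'" by (elim oocf_D_cases) simp_all
  qed
  show "digit_phi ` oocf_D = eicf_D"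
  proof (intro equalityI subsetI)
    fix e assume "e \<in> digit_phi ` oocf_D"
    then obtain d where "d \<in> oocf_D" "e = digit_phi d" by blast
    then show "e \<in> eicf_D" by (elim oocf_D_cases) simp_all
  next
    fix e assume "e \<in> eicf_D"
    then show "e \<in> digit_phi ` oocf_D"
    proof (cases rule: eicf_D_cases)
      case (1 k)
      then show ?thesis by (intro image_eqI[of _ _ "(k, 1)"]) simp_all
    next
      case (2 k)
      then show ?thesis by (intro image_eqI[of _ _ "(k + 1, -1)"]) simp_all
    qed
  qed
qed

lemma cayley_f_mem_Icc_iff:
  "-1 < p \<Longrightarrow> -1 < q \<Longrightarrow> -1 < z \<Longrightarrow> z \<in> {p..q} \<longleftrightarrow> cayley_f z \<in> {cayley_f q..cayley_f p}"
  by (auto simp: cayley_f_le_iff)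

lemma oocf_B_iff_eicf_B:
  assumes "d \<in> oocf_D" "-1 < z"
  shows "z \<in> oocf_B d \<longleftrightarrow> cayley_f z \<in> eicf_B (digit_phi d)"
  using assms(1)
proof (cases rule: oocf_D_cases)
  case (1 k)
  have "cayley_f ((2 * real k - 1) / (2 * real k + 1)) = 1 / (2 * real k)"
    using \<open>k \<ge> 1\<close> by (subst cayley_f_divide) (simp_all add: field_simps)
  moreover have "cayley_f (real k / (real k + 1)) = 1 / (2 * real k + 1)"
    using \<open>k \<ge> 1\<close> by (subst cayley_f_divide) (simp_all add: field_simps)
  moreover have "-1 < (2 * real k - 1) / (2 * real k + 1)" "-1 < real k / (real k + 1)"
    using \<open>k \<ge> 1\<close> by (simp_all add: field_simps)
  ultimately show ?thesis
    using 1 assms(2) cayley_f_mem_Icc_iff by (simp add: oocf_B_def eicf_B_def)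
next
  case (2 k)
  have "cayley_f ((real k - 1) / real k) = 1 / (2 * real k - 1)"
    using \<open>k \<ge> 1\<close> by (subst cayley_f_divide) (simp_all add: field_simps)
  moreover have "cayley_f ((2 * real k - 1) / (2 * real k + 1)) = 1 / (2 * real k)"
    using \<open>k \<ge> 1\<close> by (subst cayley_f_divide) (simp_all add: field_simps)
  moreover have "-1 < (real k - 1) / real k" "-1 < (2 * real k - 1) / (2 * real k + 1)"
    using \<open>k \<ge> 1\<close> by (simp_all add: field_simps)
  ultimately show ?thesis
    using 2 assms(2) cayley_f_mem_Icc_iff by (simp add: oocf_B_def eicf_B_def)
qed

lemma eicf_B_plus_iff:
  "0 < y \<Longrightarrow> k \<ge> 1 \<Longrightarrow> y \<in> eicf_B (2 * k, 1) \<longleftrightarrow> 1 / y \<in> {2 * real k .. 2 * real k + 1}"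
  by (auto simp: eicf_B_def field_simps)

lemma eicf_B_minus_iff:
  "0 < y \<Longrightarrow> k \<ge> 1 \<Longrightarrow> y \<in> eicf_B (2 * k, -1) \<longleftrightarrow> 1 / y \<in> {2 * real k - 1 .. 2 * real k}"
  by (auto simp: eicf_B_def field_simps)

lemma eicf_B_plus_eq: "eicf_B (2 * k, 1) = {1 / (2 * real k + 1) .. 1 / (2 * real k)}"
  by (simp add: eicf_B_def)

lemma eicf_B_minus_eq: "eicf_B (2 * k, -1) = {1 / (2 * real k) .. 1 / (2 * real k - 1)}"
  by (simp add: eicf_B_def)

lemma eicf_digit_eq_floor:
  assumes y: "0 < y" "y \<notin> \<rat>" and e: "e \<in> eicf_D" "y \<in> eicf_B e"
  shows "e = (if even \<lfloor>1 / y\<rfloor> then (nat \<lfloor>1 / y\<rfloor>, 1) else (nat \<lfloor>1 / y\<rfloor> + 1, -1))"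
proof -
  have irrational: "1 / y \<notin> \<rat>" using y(2) by (simp add: Rats_divide_iff)
  from e(1) show ?thesis
  proof (cases rule: eicf_D_cases)
    case (1 k)
    with e(2) y(1) have "\<lfloor>1 / y\<rfloor> = 2 * int k"
      using eicf_B_plus_iff floor_eq_if_mem_Icc[OF irrational] by simp
    with 1 show ?thesis by simp
  next
    case (2 k)
    with e(2) y(1) have "\<lfloor>1 / y\<rfloor> = 2 * int k - 1"
      using eicf_B_minus_iff floor_eq_if_mem_Icc[OF irrational] by simp
    with 2 show ?thesis by (simp add: nat_diff_distrib')
  qed
qed

lemma eicf_digit_exists:
  assumes y: "0 < y" "y < 1"
  shows "\<exists>e. e \<in> eicf_D \<and> y \<in> eicf_B e"
proof -
  define c where "c = nat \<lfloor>1 / y\<rfloor>"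
  have "1 < 1 / y" using y by simp
  then have floor_ge: "\<lfloor>1 / y\<rfloor> \<ge> 1" by simp
  then have "int c = \<lfloor>1 / y\<rfloor>" unfolding c_def by (intro nat_0_le) linarith
  then have "c \<ge> 1" "real c = of_int \<lfloor>1 / y\<rfloor>" using floor_ge by (linarith, metis of_int_of_nat_eq)
  then have c: "c \<ge> 1" "real c \<le> 1 / y" "1 / y \<le> real c + 1"
    using of_int_floor_le[of "1 / y"] real_of_int_floor_add_one_ge[of "1 / y"] by linarith+
  show ?thesis
  proof (cases "even c")
    case True
    then obtain k where "c = 2 * k" by blast
    with c y(1) have "k \<ge> 1" "y \<in> eicf_B (2 * k, 1)" using eicf_B_plus_iff by auto
    then show ?thesis by (intro exI[of _ "(2 * k, 1)"]) simp
  next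
    case False
    then have "even (c + 1)" by simp
    then obtain k where "c + 1 = 2 * k" by blast
    then have "k \<ge> 1" "real c = 2 * real k - 1" using c(1) by (simp_all add: algebra_simps flip: of_nat_Suc)
    with c y(1) have "y \<in> eicf_B (2 * k, -1)" using eicf_B_minus_iff by simp
    with \<open>k \<ge> 1\<close> show ?thesis by (intro exI[of _ "(2 * k, -1)"]) simp
  qed
qed

lemma eicf_digit_ex1:
  assumes "0 < y" "y < 1" "y \<notin> \<rat>"
  shows "\<exists>!e. e \<in> eicf_D \<and> y \<in> eicf_B e"
proof (rule ex_ex1I)
  show "\<exists>e. e \<in> eicf_D \<and> y \<in> eicf_B e" using eicf_digit_exists assms by blast
next
  fix e e' assume "e \<in> eicf_D \<and> y \<in> eicf_B e" "e' \<in> eicf_D \<and> y \<in> eicf_B e'"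
  then show "e = e'" using eicf_digit_eq_floor[OF assms(1,3)] by metis
qed

lemma oocf_digit_ex1_and_phi:
  assumes z: "0 < z" "z < 1" "z \<notin> \<rat>"
  shows "\<exists>!d. d \<in> oocf_D \<and> z \<in> oocf_B d"
    and "digit_phi (THE d. d \<in> oocf_D \<and> z \<in> oocf_B d)
           = (THE e. e \<in> eicf_D \<and> cayley_f z \<in> eicf_B e)"
proof -
  have "\<exists>!e. e \<in> eicf_D \<and> cayley_f z \<in> eicf_B e"
    using cayley_f_irrational_unit_interval[OF z] by (intro eicf_digit_ex1) auto
  note transfer = bij_betw_ex1_transfer[OF bij_betw_digit_phi oocf_B_iff_eicf_B this]
  show "\<exists>!d. d \<in> oocf_D \<and> z \<in> oocf_B d"
    "digit_phi (THE d. d \<in> oocf_D \<and> z \<in> oocf_B d) = (THE e. e \<in> eicf_D \<and> cayley_f z \<in> eicf_B e)"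
    using transfer z by auto
qed

lemma oocf_digit_unique:
  "0 < z \<Longrightarrow> z < 1 \<Longrightarrow> z \<notin> \<rat> \<Longrightarrow> d \<in> oocf_D \<Longrightarrow> z \<in> oocf_B d \<Longrightarrow>
    d' \<in> oocf_D \<Longrightarrow> z \<in> oocf_B d' \<Longrightarrow> d = d'"
  using oocf_digit_ex1_and_phi(1) by blast

lemma eicf_digit_unique:
  "0 < y \<Longrightarrow> y < 1 \<Longrightarrow> y \<notin> \<rat> \<Longrightarrow> e \<in> eicf_D \<Longrightarrow> y \<in> eicf_B e \<Longrightarrow>
    e' \<in> eicf_D \<Longrightarrow> y \<in> eicf_B e' \<Longrightarrow> e = e'"
  using eicf_digit_ex1 by blast

lemma oocf_T_plus:
  assumes z: "0 < z" "z < 1" "z \<notin> \<rat>" and k: "k \<ge> 1" "z \<in> oocf_B (k, 1)"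
  shows "oocf_T z = (real k - (real k + 1) * z) / (real k * z - (real k - 1))"
proof -
  have unique: "d = (k, 1)" if "d \<in> oocf_D" "z \<in> oocf_B d" for d
    using oocf_digit_unique[OF z that] k by simp
  have "\<not> (\<exists>j::nat. j \<ge> 1 \<and> z \<in> oocf_B (j + 1, -1))"
  proof (intro notI, elim exE conjE)
    fix j :: nat assume "j \<ge> 1" "z \<in> oocf_B (j + 1, -1)"
    then show False using unique[of "(j + 1, -1)"] by simp
  qed
  moreover have "(SOME j::nat. j \<ge> 1 \<and> z \<in> oocf_B (j, 1)) = k"
  proof (rule some_equality)
    fix j :: nat assume "j \<ge> 1 \<and> z \<in> oocf_B (j, 1)"
    then show "j = k" using unique[of "(j, 1)"] by simp
  qed (use k in simp)
  ultimately show ?thesis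
    using z(2) unfolding oocf_T_def by (simp only: Let_def if_False if_not_P)
qed

lemma oocf_T_minus:
  assumes z: "0 < z" "z < 1" "z \<notin> \<rat>" and k: "k \<ge> 1" "z \<in> oocf_B (k + 1, -1)"
  shows "oocf_T z = (real k * z - (real k - 1)) / (real k - (real k + 1) * z)"
proof -
  have unique: "d = (k + 1, -1)" if "d \<in> oocf_D" "z \<in> oocf_B d" for d
    using oocf_digit_unique[OF z that] k by simp
  have "(SOME j::nat. j \<ge> 1 \<and> z \<in> oocf_B (j + 1, -1)) = k"
  proof (rule some_equality)
    fix j :: nat assume "j \<ge> 1 \<and> z \<in> oocf_B (j + 1, -1)"
    then show "j = k" using unique[of "(j + 1, -1)"] by simp
  qed (use k in simp)
  then show ?thesis
    using z(2) k unfolding oocf_T_def by (auto simp: Let_def)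
qed

lemma eicf_T_plus:
  assumes y: "0 < y" "y < 1" "y \<notin> \<rat>" and k: "k \<ge> 1" "y \<in> eicf_B (2 * k, 1)"
  shows "eicf_T y = 1 / y - 2 * real k"
proof -
  have unique: "e = (2 * k, 1)" if "e \<in> eicf_D" "y \<in> eicf_B e" for e
    using eicf_digit_unique[OF y that] k by simp
  have "(SOME j::nat. j \<ge> 1 \<and> y \<in> {1 / (2 * real j + 1) .. 1 / (2 * real j)}) = k"
  proof (rule some_equality)
    fix j :: nat assume "j \<ge> 1 \<and> y \<in> {1 / (2 * real j + 1) .. 1 / (2 * real j)}"
    then show "j = k" using unique[of "(2 * j, 1)"] by (simp add: eicf_B_plus_eq)
  qed (use k in \<open>simp add: eicf_B_plus_eq\<close>)
  then show ?thesis
    using y(1) k unfolding eicf_T_def eicf_B_plus_eq by (auto simp: Let_def)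
qed

lemma eicf_T_minus:
  assumes y: "0 < y" "y < 1" "y \<notin> \<rat>" and k: "k \<ge> 1" "y \<in> eicf_B (2 * k, -1)"
  shows "eicf_T y = 2 * real k - 1 / y"
proof -
  have unique: "e = (2 * k, -1)" if "e \<in> eicf_D" "y \<in> eicf_B e" for e
    using eicf_digit_unique[OF y that] k by simp
  have "\<not> (\<exists>j::nat. j \<ge> 1 \<and> y \<in> {1 / (2 * real j + 1) .. 1 / (2 * real j)})"
  proof (intro notI, elim exE conjE)
    fix j :: nat assume "j \<ge> 1" "y \<in> {1 / (2 * real j + 1) .. 1 / (2 * real j)}"
    then show False using unique[of "(2 * j, 1)"] by (simp add: eicf_B_plus_eq)
  qed
  moreover have "(SOME j::nat. j \<ge> 1 \<and> y \<in> {1 / (2 * real j) .. 1 / (2 * real j - 1)}) = k"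
  proof (rule some_equality)
    fix j :: nat assume "j \<ge> 1 \<and> y \<in> {1 / (2 * real j) .. 1 / (2 * real j - 1)}"
    then show "j = k" using unique[of "(2 * j, -1)"] by (simp add: eicf_B_minus_eq)
  qed (use k in \<open>simp add: eicf_B_minus_eq\<close>)
  ultimately show ?thesis
    using y(1) unfolding eicf_T_def by (simp only: Let_def if_False if_not_P)
qed

lemma eicf_T_unit_interval:
  assumes y: "0 < y" "y < 1" "y \<notin> \<rat>"
  shows "0 < eicf_T y \<and> eicf_T y < 1 \<and> eicf_T y \<notin> \<rat>"
proof -
  obtain e where e: "e \<in> eicf_D" "y \<in> eicf_B e" using eicf_digit_ex1[OF y] by blast
  have "1 / y \<notin> \<rat>" using y(3) by (simp add: Rats_divide_iff)
  from e(1) show ?thesis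
  proof (cases rule: eicf_D_cases)
    case (1 k)
    then have "1 / y \<in> {2 * real k .. 2 * real k + 1}" using e(2) y(1) eicf_B_plus_iff by simp
    then show ?thesis
      using irrational_in_unit_interval_shift(1)[of "1 / y" "2 * real k"] \<open>1 / y \<notin> \<rat>\<close>
        eicf_T_plus[OF y] 1 e(2) by simp
  next
    case (2 k)
    then have "1 / y \<in> {2 * real k - 1 .. 2 * real k}" using e(2) y(1) eicf_B_minus_iff by simp
    then show ?thesis
      using irrational_in_unit_interval_shift(2)[of "1 / y" "2 * real k - 1"] \<open>1 / y \<notin> \<rat>\<close>
        eicf_T_minus[OF y] 2 e(2) by simp
  qed
qed

lemma oocf_T_eq_cayley_conj:
  assumes z: "0 < z" "z < 1" "z \<notin> \<rat>"
  shows "oocf_T z = cayley_f (eicf_T (cayley_f z))"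
proof -
  obtain d where d: "d \<in> oocf_D" "z \<in> oocf_B d" using oocf_digit_ex1_and_phi(1)[OF z] by blast
  have fz: "cayley_f z \<in> eicf_B (digit_phi d)" using oocf_B_iff_eicf_B d z(1) by simp
  note y = cayley_f_irrational_unit_interval[OF z]
  have recip: "1 / cayley_f z = (1 + z) / (1 - z)" by (simp add: cayley_f_def)
  from d(1) show ?thesis
  proof (cases rule: oocf_D_cases)
    case (1 k)
    then have "eicf_T (cayley_f z) = (1 + z) / (1 - z) - 2 * real k"
      using eicf_T_plus y fz recip by simp
    then show ?thesis using oocf_T_plus z 1 d(2) cayley_f_shift_plus by simp
  next
    case (2 k)
    then have "eicf_T (cayley_f z) = 2 * real k - (1 + z) / (1 - z)"
      using eicf_T_minus y fz recip by simp
    then show ?thesis using oocf_T_minus z 2 d(2) cayley_f_shift_minus by simp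
  qed
qed

lemma oocf_T_irrational_unit_interval:
  assumes "0 < z" "z < 1" "z \<notin> \<rat>"
  shows "0 < oocf_T z \<and> oocf_T z < 1 \<and> oocf_T z \<notin> \<rat>"
  using oocf_T_eq_cayley_conj[OF assms] cayley_f_irrational_unit_interval
    eicf_T_unit_interval cayley_f_irrational_unit_interval[OF assms] by simp

lemma funpow_oocf_T_irrational_unit_interval:
  assumes "0 < x" "x < 1" "x \<notin> \<rat>"
  shows "0 < (oocf_T ^^ n) x \<and> (oocf_T ^^ n) x < 1 \<and> (oocf_T ^^ n) x \<notin> \<rat>"
  by (induction n) (use assms oocf_T_irrational_unit_interval in auto)

lemma funpow_eicf_T_cayley_f:
  assumes "0 < x" "x < 1" "x \<notin> \<rat>"
  shows "(eicf_T ^^ n) (cayley_f x) = cayley_f ((oocf_T ^^ n) x)"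
proof (induction n)
  case (Suc n)
  define z where "z = (oocf_T ^^ n) x"
  have z: "0 < z" "z < 1" "z \<notin> \<rat>"
    using funpow_oocf_T_irrational_unit_interval[OF assms] unfolding z_def by auto
  have "eicf_T (cayley_f z) \<noteq> -1"
    using eicf_T_unit_interval cayley_f_irrational_unit_interval[OF z] by force
  then have "eicf_T (cayley_f z) = cayley_f (oocf_T z)"
    using oocf_T_eq_cayley_conj[OF z] cayley_f_involution by simp
  then show ?case using Suc.IH unfolding z_def by simp
qed simp

lemma oocf_tail_step:
  assumes d: "d \<in> oocf_D" and A: "A \<ge> 1"
  shows "1 \<le> real (fst d) + real_of_int (snd d) / (2 - 1 / A)"
    and "real (fst (digit_phi d)) + real_of_int (snd (digit_phi d)) / (2 * A - 1)
           = 2 * (real (fst d) + real_of_int (snd d) / (2 - 1 / A)) - 1"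
proof -
  have q: "1 / (2 - 1 / A) = A / (2 * A - 1)" using A by (simp add: field_simps)
  have "0 < A / (2 * A - 1)" "A / (2 * A - 1) \<le> 1" using A by (simp_all add: field_simps)
  moreover have "2 * (A / (2 * A - 1)) = 1 + 1 / (2 * A - 1)" using A by (simp add: field_simps)
  ultimately show "1 \<le> real (fst d) + real_of_int (snd d) / (2 - 1 / A)"
    "real (fst (digit_phi d)) + real_of_int (snd (digit_phi d)) / (2 * A - 1)
       = 2 * (real (fst d) + real_of_int (snd d) / (2 - 1 / A)) - 1"
    using d q by (auto elim!: oocf_D_cases simp: divide_inverse algebra_simps)
qed

lemma eicf_tail_map_digit_phi:
  "ds \<noteq> [] \<Longrightarrow> set ds \<subseteq> oocf_D \<Longrightarrow>
    1 \<le> oocf_tail ds \<and> eicf_tail (map digit_phi ds) = 2 * oocf_tail ds - 1"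
proof (induction ds rule: oocf_tail.induct)
  case (2 a e)
  then show ?case by (auto elim!: oocf_D_cases)
next
  case (3 a e d ds)
  then have IH: "1 \<le> oocf_tail (d # ds)" "eicf_tail (map digit_phi (d # ds)) = 2 * oocf_tail (d # ds) - 1"
    by auto
  have "(a, e) \<in> oocf_D" using "3.prems" by simp
  from oocf_tail_step[OF this IH(1)] IH(2) show ?case
    by (cases "digit_phi (a, e)") simp
qed simp

lemma oocf_digit_in_D:
  assumes "0 < x" "x < 1" "x \<notin> \<rat>"
  shows "oocf_digit x n \<in> oocf_D"
  using theI'[OF oocf_digit_ex1_and_phi(1)] funpow_oocf_T_irrational_unit_interval[OF assms]
  unfolding oocf_digit_def by blast

lemma eicf_digit_cayley_f:
  assumes "0 < x" "x < 1" "x \<notin> \<rat>"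
  shows "eicf_digit (cayley_f x) n = digit_phi (oocf_digit x n)"
  using oocf_digit_ex1_and_phi(2) funpow_oocf_T_irrational_unit_interval[OF assms]
  unfolding oocf_digit_def eicf_digit_def funpow_eicf_T_cayley_f[OF assms] by simp

theorem mainTheorem13:
  fixes x :: real
  assumes "0 < x" and "x < 1" and "x \<notin> \<rat>"
  shows "\<forall>n\<ge>1. eicf_digit (cayley_f x) n = digit_phi (oocf_digit x n)
              \<and> eicf_conv (cayley_f x) n = cayley_f (oocf_conv x n)"
proof (intro allI impI conjI)
  fix n :: nat assume "n \<ge> 1"
  show "eicf_digit (cayley_f x) n = digit_phi (oocf_digit x n)"
    using eicf_digit_cayley_f[OF assms] .
  define ds where "ds = map (oocf_digit x) [1..<n + 1]"
  have "ds \<noteq> []" "set ds \<subseteq> oocf_D"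
    using \<open>n \<ge> 1\<close> oocf_digit_in_D[OF assms] unfolding ds_def by auto
  then have tail: "1 \<le> oocf_tail ds" "eicf_tail (map digit_phi ds) = 2 * oocf_tail ds - 1"
    using eicf_tail_map_digit_phi by blast+
  have "map (eicf_digit (cayley_f x)) [1..<n + 1] = map digit_phi ds"
    unfolding ds_def using eicf_digit_cayley_f[OF assms] by simp
  then show "eicf_conv (cayley_f x) n = cayley_f (oocf_conv x n)"
    unfolding eicf_conv_def oocf_conv_def ds_def[symmetric] using tail cayley_f_one_minus_inverse by simp
qed

end
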